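(* Let $\omega\in L^1([0,1],\mathbb{R})$ with $\omega>0$ a.e., and assume (H1) $\omega$ is monotonic on $[0,1]$ and (H2) $\inf_{x\in[0,1]}\omega(x)>0$. Fix $c_1\ge 0$ and $c_2\in\mathbb{R}$, not both zero, and for $\lambda\ge 0$ let $\theta(\cdot;\lambda)$ be the absolutely continuous solution on $[0,1]$ of $$\theta'(x;\lambda)=\sqrt{\lambda}\big(\cos^2\theta(x;\lambda)+\omega(x)\sin^2\theta(x;\lambda)\big),\qquad \theta(0;\lambda)=\arctan\frac{\sqrt{\lambda}c_1}{c_2}\in[0,\pi).$$ Define $$H(x;\lambda)=\frac{\sqrt{\lambda}}{2}\int_0^x\big(1-\omega(t)\big)\sin 2\theta(t;\lambda)\,dt,\qquad x\in[0,1].$$ Then $H(x;\lambda)$ is uniformly bounded for all sufficiently large $\lambda>0$: there exist $\Lambda>0$ and $M>0$ such that $|H(x;\lambda)|\le M$ for all $x\in[0,1]$ and all $\lambda\ge\Lambda$.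
   Context: $\theta(0;\lambda)$ is the angle in $[0,\pi)$ whose tangent is $\sqrt{\lambda}c_1/c_2$ (equal to $\pi/2$ when $c_2=0$); $\theta$ is the Prüfer angle of the solution of $-y''=\lambda\omega y$, $y(0)=c_1$, $y'(0)=c_2$. *)

theory Defs
  imports "HOL-Analysis.Analysis"
begin

definition theta0 :: "real \<Rightarrow> real \<Rightarrow> real \<Rightarrow> real" where
  "theta0 c1 c2 l =
     (if c2 = 0 then pi / 2
      else if arctan (sqrt l * c1 / c2) \<ge> 0 then arctan (sqrt l * c1 / c2)
      else arctan (sqrt l * c1 / c2) + pi)"

definition Hfun :: "(real \<Rightarrow> real) \<Rightarrow> (real \<Rightarrow> real \<Rightarrow> real) \<Rightarrow> real \<Rightarrow> real \<Rightarrow> real" where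
  "Hfun w \<theta> x l = sqrt l / 2 * integral {0..x} (\<lambda>t. (1 - w t) * sin (2 * \<theta> t l))"

end

theory Submission
  imports Defs
begin

text \<open>
  Write \<open>D(a, p) = cos\<^sup>2 p + a sin\<^sup>2 p\<close>, so that the Pruefer equation reads
  \<open>\<theta>' = \<surd>\<lambda> D(w, \<theta>)\<close>, and let \<open>\<Phi>(a, p) = - ln D(a, p)\<close>, whose \<open>p\<close>-derivative is
  \<open>(1 - a) sin 2p / D(a, p)\<close>. If \<open>w\<close> were constant, \<open>\<surd>\<lambda> (1 - w) sin 2\<theta>\<close> would be the exact
  derivative of \<open>\<Phi>(w, \<theta>)\<close>, and \<open>H\<close> would be bounded by the oscillation of the bounded
  function \<open>\<Phi>\<close>. For monotone \<open>w\<close>, cut \<open>[0, x]\<close> into \<open>N\<close> cells and freeze \<open>w\<close> at the left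
  end of each cell: on a cell of length \<open>h\<close> the integral differs from the increment of
  \<open>\<Phi>(w(s\<^sub>i), \<theta>)\<close> by \<open>O(\<surd>\<lambda> h |\<Delta>w| + \<lambda> h\<^sup>2)\<close>, and moving the frozen value to the next cell
  changes \<open>\<Phi>\<close> by at most \<open>|\<Delta>w| / inf w\<close>. Monotonicity turns the sum of the \<open>|\<Delta>w|\<close> into
  \<open>|w(x) - w(0)|\<close>, and letting \<open>N \<rightarrow> \<infinity>\<close> leaves a bound that does not depend on \<open>\<lambda>\<close>.
\<close>

definition prufer_rate :: "real \<Rightarrow> real \<Rightarrow> real" where
  "prufer_rate a p = (cos p)\<^sup>2 + a * (sin p)\<^sup>2"

definition prufer_potential :: "real \<Rightarrow> real \<Rightarrow> real" where
  "prufer_potential a p = - ln (prufer_rate a p)"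

definition prufer_potential_deriv :: "real \<Rightarrow> real \<Rightarrow> real" where
  "prufer_potential_deriv a p = (1 - a) * sin (2 * p) / prufer_rate a p"

lemma prufer_rate_ge_min: "min 1 a \<le> prufer_rate a p"
proof -
  have "min 1 a * (cos p)\<^sup>2 \<le> 1 * (cos p)\<^sup>2" "min 1 a * (sin p)\<^sup>2 \<le> a * (sin p)\<^sup>2"
    by (intro mult_right_mono; simp)+
  moreover have "min 1 a = min 1 a * (cos p)\<^sup>2 + min 1 a * (sin p)\<^sup>2"
    by (simp flip: distrib_left)
  ultimately show ?thesis unfolding prufer_rate_def by linarith
qed

lemma prufer_rate_le_max: "prufer_rate a p \<le> max 1 a"
proof -
  have "1 * (cos p)\<^sup>2 \<le> max 1 a * (cos p)\<^sup>2" "a * (sin p)\<^sup>2 \<le> max 1 a * (sin p)\<^sup>2"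
    by (intro mult_right_mono; simp)+
  moreover have "max 1 a = max 1 a * (cos p)\<^sup>2 + max 1 a * (sin p)\<^sup>2"
    by (simp flip: distrib_left)
  ultimately show ?thesis unfolding prufer_rate_def by linarith
qed

lemma prufer_rate_bounds:
  assumes "0 < m" "m \<le> a" "a \<le> M"
  shows "min 1 m \<le> prufer_rate a p" "prufer_rate a p \<le> max 1 M" "0 < prufer_rate a p"
  using prufer_rate_ge_min[of a p] prufer_rate_le_max[of a p] assms by linarith+

lemma abs_ln_diff_le:
  fixes u v :: real
  assumes "0 < u" "0 < v"
  shows "\<bar>ln u - ln v\<bar> \<le> \<bar>u - v\<bar> / min u v"
proof -
  have "ln x - ln y \<le> (x - y) / y" if "0 < x" "0 < y" for x y :: real
    using ln_le_minus_one[of "x / y"] that by (simp add: ln_div diff_divide_distrib)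
  from this[of u v] this[of v u] assms show ?thesis
    by (cases "u \<le> v") (auto simp: min_def abs_if)
qed

lemma abs_sin_diff_le: "\<bar>sin x - sin y\<bar> \<le> \<bar>x - y\<bar>" for x y :: real
proof -
  have "\<bar>sin x - sin y\<bar> = 2 * \<bar>sin ((x - y) / 2)\<bar> * \<bar>cos ((x + y) / 2)\<bar>"
    by (simp add: sin_diff_sin abs_mult)
  also have "\<dots> \<le> 2 * \<bar>(x - y) / 2\<bar> * 1"
    by (intro mult_mono abs_sin_x_le_abs_x) auto
  finally show ?thesis by simp
qed

lemma abs_sin_sq_diff_le: "\<bar>(sin x)\<^sup>2 - (sin y)\<^sup>2\<bar> \<le> 2 * \<bar>x - y\<bar>" for x y :: real
proof -
  have "(sin x)\<^sup>2 - (sin y)\<^sup>2 = (sin x - sin y) * (sin x + sin y)"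
    by (simp add: power2_eq_square algebra_simps)
  then have "\<bar>(sin x)\<^sup>2 - (sin y)\<^sup>2\<bar> = \<bar>sin x - sin y\<bar> * \<bar>sin x + sin y\<bar>"
    by (simp only: abs_mult)
  also have "\<dots> \<le> \<bar>x - y\<bar> * 2"
  proof (intro mult_mono abs_sin_diff_le)
    show "\<bar>sin x + sin y\<bar> \<le> 2"
      using abs_triangle_ineq[of "sin x" "sin y"] abs_sin_le_one[of x] abs_sin_le_one[of y] by linarith
  qed auto
  finally show ?thesis by (simp add: mult.commute)
qed

lemma prufer_rate_diff: "prufer_rate a x - prufer_rate a y = (a - 1) * ((sin x)\<^sup>2 - (sin y)\<^sup>2)"
  unfolding prufer_rate_def using sin_cos_squared_add[of x] sin_cos_squared_add[of y] by algebra

lemma abs_prufer_potential_le: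
  assumes "0 < m" "m \<le> a" "a \<le> M"
  shows "\<bar>prufer_potential a p\<bar> \<le> ln (max 1 M) - ln (min 1 m)"
proof -
  note D = prufer_rate_bounds[OF assms, of p]
  have "ln (min 1 m) \<le> ln (prufer_rate a p)" "ln (prufer_rate a p) \<le> ln (max 1 M)"
    using D assms by simp_all
  moreover have "ln (min 1 m) \<le> 0" "0 \<le> ln (max 1 M)"
    using assms by simp_all
  ultimately show ?thesis unfolding prufer_potential_def by linarith
qed

lemma prufer_potential_lipschitz_coeff:
  assumes "0 < m" "m \<le> a" "a \<le> M" "m \<le> b" "b \<le> M"
  shows "\<bar>prufer_potential b p - prufer_potential a p\<bar> \<le> \<bar>b - a\<bar> / m"
proof (cases "sin p = 0")
  case True
  then show ?thesis unfolding prufer_potential_def prufer_rate_def using assms by simp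
next
  case False
  then have s2: "0 < (sin p)\<^sup>2" by simp
  have Da: "0 < prufer_rate a p" and Db: "0 < prufer_rate b p"
    using prufer_rate_bounds assms by blast+
  have "m * (sin p)\<^sup>2 \<le> a * (sin p)\<^sup>2" "m * (sin p)\<^sup>2 \<le> b * (sin p)\<^sup>2"
    using assms s2 by (auto intro: mult_right_mono)
  then have low: "m * (sin p)\<^sup>2 \<le> min (prufer_rate b p) (prufer_rate a p)"
    unfolding prufer_rate_def by (simp add: add_increasing)
  have "\<bar>prufer_potential b p - prufer_potential a p\<bar>
      \<le> \<bar>prufer_rate b p - prufer_rate a p\<bar> / min (prufer_rate b p) (prufer_rate a p)"
    unfolding prufer_potential_def using abs_ln_diff_le[OF Db Da] by (simp add: abs_minus_commute)
  also have "\<bar>prufer_rate b p - prufer_rate a p\<bar> = \<bar>b - a\<bar> * (sin p)\<^sup>2"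
    unfolding prufer_rate_def by (simp add: abs_mult left_diff_distrib[symmetric])
  also have "\<bar>b - a\<bar> * (sin p)\<^sup>2 / min (prufer_rate b p) (prufer_rate a p)
      \<le> \<bar>b - a\<bar> * (sin p)\<^sup>2 / (m * (sin p)\<^sup>2)"
    using low assms s2 Da Db by (intro divide_left_mono mult_pos_pos) auto
  also have "\<dots> = \<bar>b - a\<bar> / m" using s2 by simp
  finally show ?thesis .
qed

lemma has_real_derivative_prufer_potential:
  assumes "0 < prufer_rate a p"
  shows "(prufer_potential a has_real_derivative prufer_potential_deriv a p) (at p)"
proof -
  have "((\<lambda>p. - ln ((cos p)\<^sup>2 + a * (sin p)\<^sup>2)) has_real_derivative
      - ((2 * cos p * (- sin p) + a * (2 * sin p * cos p)) / ((cos p)\<^sup>2 + a * (sin p)\<^sup>2))) (at p)"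
    using assms unfolding prufer_rate_def
    by (auto intro!: derivative_eq_intros simp: power2_eq_square)
  moreover have "- ((2 * cos p * (- sin p) + a * (2 * sin p * cos p)) / ((cos p)\<^sup>2 + a * (sin p)\<^sup>2))
      = prufer_potential_deriv a p"
    unfolding prufer_potential_deriv_def prufer_rate_def sin_double by (simp add: divide_simps algebra_simps)
  ultimately show ?thesis unfolding prufer_potential_def[abs_def] prufer_rate_def by simp
qed

lemma prufer_potential_mvt:
  assumes "0 < a" "p \<le> q"
  obtains z where "p \<le> z" "z \<le> q"
    "prufer_potential a q - prufer_potential a p = (q - p) * prufer_potential_deriv a z"
proof (cases "p = q")
  case False
  with assms have "p < q" by simp
  moreover have "0 < prufer_rate a z" for z
    using prufer_rate_ge_min[of a z] assms by linarith
  ultimately obtain z where "p < z" "z < q"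
    "prufer_potential a q - prufer_potential a p = (q - p) * prufer_potential_deriv a z"
    using MVT2[of p q "prufer_potential a" "prufer_potential_deriv a"]
      has_real_derivative_prufer_potential by blast
  with that show ?thesis by (meson less_imp_le)
qed (use that in auto)

lemma abs_prufer_potential_deriv_le:
  assumes "0 < m" "m \<le> a" "a \<le> M"
  shows "\<bar>prufer_potential_deriv a p\<bar> \<le> max 1 M / min 1 m"
proof -
  note D = prufer_rate_bounds[OF assms, of p]
  have "\<bar>1 - a\<bar> \<le> max 1 M" using assms by linarith
  have "\<bar>prufer_potential_deriv a p\<bar> = \<bar>1 - a\<bar> * \<bar>sin (2 * p)\<bar> / prufer_rate a p"
    unfolding prufer_potential_deriv_def using D by (simp add: abs_mult)
  also have "\<dots> \<le> max 1 M * 1 / min 1 m"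
    using D assms \<open>\<bar>1 - a\<bar> \<le> max 1 M\<close> by (intro frac_le mult_mono) auto
  finally show ?thesis by simp
qed

lemma prufer_potential_deriv_lipschitz:
  assumes "0 < m" "m \<le> a" "a \<le> M"
  shows "\<bar>prufer_potential_deriv a x - prufer_potential_deriv a y\<bar>
    \<le> 4 * (max 1 M)\<^sup>2 / (min 1 m)\<^sup>2 * \<bar>x - y\<bar>"
proof -
  define d U where "d = min 1 m" and "U = max 1 M"
  define Dx Dy where "Dx = prufer_rate a x" and "Dy = prufer_rate a y"
  have d: "0 < d" using assms by (simp add: d_def)
  have Dx: "d \<le> Dx" "Dx \<le> U" and Dy: "d \<le> Dy" "Dy \<le> U"
    using prufer_rate_bounds[OF assms] unfolding d_def U_def Dx_def Dy_def by blast+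
  have a1: "\<bar>1 - a\<bar> \<le> U" "\<bar>a - 1\<bar> \<le> U"
    using assms unfolding U_def by linarith+
  have sin2: "\<bar>sin (2 * x) - sin (2 * y)\<bar> \<le> 2 * \<bar>x - y\<bar>"
  proof -
    have "\<bar>2 * x - 2 * y\<bar> = 2 * \<bar>x - y\<bar>"
      using abs_mult[of 2 "x - y"] by (simp add: right_diff_distrib)
    then show ?thesis using abs_sin_diff_le[of "2 * x" "2 * y"] by linarith
  qed
  have "\<bar>Dy - Dx\<bar> = \<bar>a - 1\<bar> * \<bar>(sin y)\<^sup>2 - (sin x)\<^sup>2\<bar>"
    unfolding Dx_def Dy_def prufer_rate_diff by (simp add: abs_mult)
  also have "\<dots> \<le> U * (2 * \<bar>x - y\<bar>)"
    using a1 abs_sin_sq_diff_le[of y x] by (intro mult_mono) (auto simp: abs_minus_commute)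
  finally have rate_diff: "\<bar>Dy - Dx\<bar> \<le> U * (2 * \<bar>x - y\<bar>)" .
  have numerator: "\<bar>sin (2 * x) * Dy - sin (2 * y) * Dx\<bar> \<le> 4 * U * \<bar>x - y\<bar>"
  proof -
    have "sin (2 * x) * Dy - sin (2 * y) * Dx = (sin (2 * x) - sin (2 * y)) * Dy + sin (2 * y) * (Dy - Dx)"
      by (simp add: algebra_simps)
    then have "\<bar>sin (2 * x) * Dy - sin (2 * y) * Dx\<bar>
        \<le> \<bar>sin (2 * x) - sin (2 * y)\<bar> * Dy + \<bar>sin (2 * y)\<bar> * \<bar>Dy - Dx\<bar>"
      using Dy d abs_triangle_ineq[of "(sin (2 * x) - sin (2 * y)) * Dy" "sin (2 * y) * (Dy - Dx)"]
      by (simp add: abs_mult)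
    also have "\<dots> \<le> 2 * \<bar>x - y\<bar> * U + 1 * (U * (2 * \<bar>x - y\<bar>))"
      using rate_diff sin2 Dy d by (intro add_mono mult_mono) auto
    finally show ?thesis by simp
  qed
  have "prufer_potential_deriv a x - prufer_potential_deriv a y
      = (1 - a) * (sin (2 * x) * Dy - sin (2 * y) * Dx) / (Dx * Dy)"
    unfolding prufer_potential_deriv_def Dx_def[symmetric] Dy_def[symmetric] using Dx Dy d
    by (simp add: field_simps)
  then have "\<bar>prufer_potential_deriv a x - prufer_potential_deriv a y\<bar>
      = \<bar>1 - a\<bar> * \<bar>sin (2 * x) * Dy - sin (2 * y) * Dx\<bar> / (Dx * Dy)"
    using Dx Dy d by (simp add: abs_mult abs_divide)
  also have "\<dots> \<le> U * (4 * U * \<bar>x - y\<bar>) / (d * d)"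
    using Dx Dy d a1 numerator by (intro frac_le mult_mono) auto
  finally show ?thesis unfolding d_def U_def by (simp add: power2_eq_square algebra_simps)
qed

lemma prufer_frozen_coefficient_error:
  assumes "0 < m" "m \<le> a" "a \<le> M" "m \<le> b" "b \<le> M"
  shows "\<bar>(1 - b) * sin (2 * x) - prufer_potential_deriv a y * prufer_rate b x\<bar>
    \<le> (1 + max 1 M / min 1 m) * \<bar>b - a\<bar> + 4 * (max 1 M)^3 / (min 1 m)\<^sup>2 * \<bar>x - y\<bar>"
proof -
  note Da = prufer_rate_bounds[OF assms(1-3), of x]
  have frozen: "prufer_potential_deriv a x * prufer_rate a x = (1 - a) * sin (2 * x)"
    unfolding prufer_potential_deriv_def using Da by simp
  have rate_b: "prufer_rate b x = prufer_rate a x + (b - a) * (sin x)\<^sup>2"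
    unfolding prufer_rate_def by (simp add: algebra_simps)
  have split: "(1 - b) * sin (2 * x) - prufer_potential_deriv a y * prufer_rate b x
      = (a - b) * sin (2 * x)
        + (prufer_potential_deriv a x - prufer_potential_deriv a y) * prufer_rate a x
        - prufer_potential_deriv a y * ((b - a) * (sin x)\<^sup>2)"
    unfolding rate_b using frozen by (simp add: algebra_simps)
  have sin_sq: "(sin x)\<^sup>2 \<le> 1"
    using sin_cos_squared_add[of x] zero_le_power2[of "cos x"] by linarith
  have "\<bar>(1 - b) * sin (2 * x) - prufer_potential_deriv a y * prufer_rate b x\<bar>
      \<le> \<bar>a - b\<bar> * \<bar>sin (2 * x)\<bar>
        + \<bar>prufer_potential_deriv a x - prufer_potential_deriv a y\<bar> * prufer_rate a x
        + \<bar>prufer_potential_deriv a y\<bar> * (\<bar>b - a\<bar> * (sin x)\<^sup>2)"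
    unfolding split using Da
    by (simp add: abs_mult order_trans[OF abs_triangle_ineq4] abs_triangle_ineq
        order_trans[OF abs_triangle_ineq] add_mono)
  also have "\<dots> \<le> \<bar>b - a\<bar> * 1 + (4 * (max 1 M)\<^sup>2 / (min 1 m)\<^sup>2 * \<bar>x - y\<bar>) * max 1 M
      + max 1 M / min 1 m * (\<bar>b - a\<bar> * 1)"
    using assms Da sin_sq
    by (intro add_mono mult_mono prufer_potential_deriv_lipschitz abs_prufer_potential_deriv_le)
      (auto simp: abs_minus_commute)
  finally show ?thesis by (simp add: algebra_simps power2_eq_square power3_eq_cube)
qed

lemma mono_or_antimono_on_between:
  fixes f :: "real \<Rightarrow> 'b::linorder"
  assumes "mono_on {a..b} f \<or> antimono_on {a..b} f" "a \<le> s" "s \<le> \<tau>" "\<tau> \<le> t" "t \<le> b"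
  shows "min (f s) (f t) \<le> f \<tau> \<and> f \<tau> \<le> max (f s) (f t)"
  using assms(1)
proof
  assume mono: "mono_on {a..b} f"
  have "f s \<le> f \<tau>" "f \<tau> \<le> f t"
    using mono_onD[OF mono, of s \<tau>] mono_onD[OF mono, of \<tau> t] assms(2-5) by auto
  then show ?thesis by auto
next
  assume anti: "antimono_on {a..b} f"
  have "f \<tau> \<le> f s" "f t \<le> f \<tau>"
    using monotone_onD[OF anti, of s \<tau>] monotone_onD[OF anti, of \<tau> t] assms(2-5) by auto
  then show ?thesis by auto
qed

lemma mono_or_antimono_on_INF_max_bounds:
  fixes f :: "real \<Rightarrow> real"
  assumes f: "mono_on {a..b} f \<or> antimono_on {a..b} f" and x: "x \<in> {a..b}"
  shows "(INF y\<in>{a..b}. f y) \<le> f x \<and> f x \<le> max (f a) (f b)"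
proof -
  have between: "min (f a) (f b) \<le> f y \<and> f y \<le> max (f a) (f b)" if "y \<in> {a..b}" for y
    using mono_or_antimono_on_between[OF f, of a y b] that by auto
  then have "bdd_below (f ` {a..b})"
    by (intro bdd_belowI2[where m = "min (f a) (f b)"]) simp
  then show ?thesis
    using cINF_lower[of f "{a..b}" x] between[OF x] x by simp
qed

lemma sum_abs_diff_monotone:
  fixes u :: "nat \<Rightarrow> real"
  assumes "(\<forall>i<N. u i \<le> u (Suc i)) \<or> (\<forall>i<N. u (Suc i) \<le> u i)"
  shows "(\<Sum>i<N. \<bar>u (Suc i) - u i\<bar>) = \<bar>u N - u 0\<bar>"
  using assms
proof
  assume inc: "\<forall>i<N. u i \<le> u (Suc i)"
  then have "(\<Sum>i<N. \<bar>u (Suc i) - u i\<bar>) = (\<Sum>i<N. u (Suc i) - u i)"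
    by (intro sum.cong) auto
  moreover have "0 \<le> (\<Sum>i<N. u (Suc i) - u i)"
    using inc by (intro sum_nonneg) auto
  ultimately show ?thesis by (simp add: sum_lessThan_telescope)
next
  assume dec: "\<forall>i<N. u (Suc i) \<le> u i"
  then have "(\<Sum>i<N. \<bar>u (Suc i) - u i\<bar>) = (\<Sum>i<N. u i - u (Suc i))"
    by (intro sum.cong) auto
  moreover have "0 \<le> (\<Sum>i<N. u i - u (Suc i))"
    using dec by (intro sum_nonneg) auto
  ultimately show ?thesis by (simp add: sum_lessThan_telescope' abs_minus_commute)
qed

lemma mono_or_antimono_on_comp_incseq:
  fixes f :: "real \<Rightarrow> 'b::linorder" and s :: "nat \<Rightarrow> real"
  assumes f: "mono_on {a..b} f \<or> antimono_on {a..b} f"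
    and s_range: "\<And>i. i \<le> N \<Longrightarrow> s i \<in> {a..b}" and s_inc: "\<And>i. i < N \<Longrightarrow> s i \<le> s (Suc i)"
  shows "(\<forall>i<N. f (s i) \<le> f (s (Suc i))) \<or> (\<forall>i<N. f (s (Suc i)) \<le> f (s i))"
  using f
proof
  assume mono: "mono_on {a..b} f"
  have "f (s i) \<le> f (s (Suc i))" if "i < N" for i
    using mono_onD[OF mono, of "s i" "s (Suc i)"] s_range s_inc that by auto
  then show ?thesis by blast
next
  assume anti: "antimono_on {a..b} f"
  have "f (s (Suc i)) \<le> f (s i)" if "i < N" for i
    using monotone_onD[OF anti, of "s i" "s (Suc i)"] s_range s_inc that by auto
  then show ?thesis by blast
qed

lemma telescoping_estimate:
  fixes J F u :: "nat \<Rightarrow> real"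
  assumes step: "\<And>i. i < N \<Longrightarrow> \<bar>J (Suc i) - J i - (F (Suc i) - F i)\<bar> \<le> a * \<bar>u (Suc i) - u i\<bar> + b"
    and u_monotone: "(\<forall>i<N. u i \<le> u (Suc i)) \<or> (\<forall>i<N. u (Suc i) \<le> u i)"
  shows "\<bar>J N - J 0 - (F N - F 0)\<bar> \<le> a * \<bar>u N - u 0\<bar> + real N * b"
proof -
  have "\<bar>J N - J 0 - (F N - F 0)\<bar> = \<bar>\<Sum>i<N. J (Suc i) - J i - (F (Suc i) - F i)\<bar>"
    using sum_lessThan_telescope[of J N] sum_lessThan_telescope[of F N]
    by (simp only: sum_subtractf[of "\<lambda>i. J (Suc i) - J i"])
  also have "\<dots> \<le> (\<Sum>i<N. \<bar>J (Suc i) - J i - (F (Suc i) - F i)\<bar>)"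
    by (rule sum_abs)
  also have "\<dots> \<le> (\<Sum>i<N. a * \<bar>u (Suc i) - u i\<bar> + b)"
    using step by (intro sum_mono) auto
  also have "\<dots> = a * \<bar>u N - u 0\<bar> + real N * b"
    by (simp add: sum.distrib sum_abs_diff_monotone[OF u_monotone] flip: sum_distrib_left)
  finally show ?thesis .
qed

lemma has_integral_subinterval_of_indefinite:
  fixes f g :: "real \<Rightarrow> real"
  assumes indef: "\<And>x. x \<in> {a..b} \<Longrightarrow> (f has_integral g x - g a) {a..x}"
    and "a \<le> s" "s \<le> t" "t \<le> b"
  shows "(f has_integral g t - g s) {s..t}"
proof -
  have "(f has_integral g t - g a) {a..t}"
    using assms by (intro indef) auto
  then have int_at: "f integrable_on {a..t}"
    by (rule has_integral_integrable)
  then have int_st: "f integrable_on {s..t}"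
    by (rule integrable_on_subinterval) (use assms in auto)
  have "integral {a..s} f + integral {s..t} f = integral {a..t} f"
    using assms by (intro Henstock_Kurzweil_Integration.integral_combine[OF _ _ int_at]) auto
  moreover have "integral {a..s} f = g s - g a" "integral {a..t} f = g t - g a"
    using indef[of s] indef[of t] assms by (auto intro: integral_unique)
  ultimately have "integral {s..t} f = g t - g s" by linarith
  with int_st show ?thesis by (metis has_integral_integral)
qed

lemma continuous_on_of_indefinite:
  fixes f g :: "real \<Rightarrow> real"
  assumes indef: "\<And>x. x \<in> {a..b} \<Longrightarrow> (f has_integral g x - g a) {a..x}"
  shows "continuous_on {a..b} g"
proof (cases "a \<le> b")
  case True
  then have "f integrable_on {a..b}"
    using indef[of b] by (auto intro: has_integral_integrable)
  then have "continuous_on {a..b} (\<lambda>x. g a + integral {a..x} f)"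
    by (intro continuous_intros indefinite_integral_continuous_1)
  moreover have "g a + integral {a..x} f = g x" if "x \<in> {a..b}" for x
    using integral_unique[OF indef[OF that]] by simp
  ultimately show ?thesis by (rule continuous_on_eq)
qed simp

locale prufer_solution =
  fixes w \<theta> :: "real \<Rightarrow> real" and l m M :: real
  assumes l_nonneg: "0 \<le> l" and m_pos: "0 < m"
    and w_bounds: "\<And>\<tau>. \<tau> \<in> {0..1} \<Longrightarrow> m \<le> w \<tau> \<and> w \<tau> \<le> M"
    and w_monotone: "mono_on {0..1} w \<or> antimono_on {0..1} w"
    and w_integrable: "w absolutely_integrable_on {0..1}"
    and prufer_equation: "\<And>x. x \<in> {0..1} \<Longrightarrow>
      ((\<lambda>\<tau>. sqrt l * prufer_rate (w \<tau>) (\<theta> \<tau>)) has_integral \<theta> x - \<theta> 0) {0..x}"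
begin

lemma prufer_equation_on:
  "0 \<le> s \<Longrightarrow> s \<le> t \<Longrightarrow> t \<le> 1 \<Longrightarrow>
    ((\<lambda>\<tau>. sqrt l * prufer_rate (w \<tau>) (\<theta> \<tau>)) has_integral \<theta> t - \<theta> s) {s..t}"
  by (rule has_integral_subinterval_of_indefinite[OF prufer_equation])

lemma angle_increment_bounds:
  assumes "0 \<le> s" "s \<le> t" "t \<le> 1"
  shows "0 \<le> \<theta> t - \<theta> s" "\<theta> t - \<theta> s \<le> sqrt l * max 1 M * (t - s)"
proof -
  have rate: "0 < prufer_rate (w \<tau>) (\<theta> \<tau>)" "prufer_rate (w \<tau>) (\<theta> \<tau>) \<le> max 1 M"
    if "\<tau> \<in> {s..t}" for \<tau>
    using prufer_rate_bounds[OF m_pos, of "w \<tau>" M] w_bounds[of \<tau>] that assms by auto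
  note eq = prufer_equation_on[OF assms]
  show "0 \<le> \<theta> t - \<theta> s"
    using rate l_nonneg by (intro has_integral_nonneg[OF eq]) (simp add: less_imp_le)
  have "((\<lambda>\<tau>. sqrt l * max 1 M) has_integral sqrt l * max 1 M * (t - s)) {s..t}"
    using has_integral_const_real[of "sqrt l * max 1 M" s t] assms by (simp add: mult.commute)
  then show "\<theta> t - \<theta> s \<le> sqrt l * max 1 M * (t - s)"
    using rate l_nonneg by (intro has_integral_le[OF eq]) (auto intro: mult_left_mono)
qed

lemma integrand_integrable:
  assumes "0 \<le> s" "t \<le> 1"
  shows "(\<lambda>\<tau>. (1 - w \<tau>) * sin (2 * \<theta> \<tau>)) integrable_on {s..t}"
proof -
  have sin_cont: "continuous_on {0..1} (\<lambda>\<tau>. sin (2 * \<theta> \<tau>))"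
    using continuous_on_of_indefinite[OF prufer_equation] by (intro continuous_intros)
  have "(\<lambda>\<tau>. sin (2 * \<theta> \<tau>) * w \<tau>) absolutely_integrable_on {0..1}"
  proof (rule absolutely_integrable_bounded_measurable_product_real[OF _ _ _ w_integrable])
    show "(\<lambda>\<tau>. sin (2 * \<theta> \<tau>)) \<in> borel_measurable (lebesgue_on {0..1})"
      by (rule continuous_imp_measurable_on_sets_lebesgue[OF sin_cont]) auto
    show "bounded ((\<lambda>\<tau>. sin (2 * \<theta> \<tau>)) ` {0..1})"
      by (rule boundedI[of _ 1]) auto
  qed auto
  then have "(\<lambda>\<tau>. sin (2 * \<theta> \<tau>) * w \<tau>) integrable_on {0..1}"
    by (simp add: absolutely_integrable_on_def)
  moreover have "(\<lambda>\<tau>. sin (2 * \<theta> \<tau>)) integrable_on {0..1}"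
    using sin_cont by (rule integrable_continuous_interval)
  ultimately have "(\<lambda>\<tau>. sin (2 * \<theta> \<tau>) - sin (2 * \<theta> \<tau>) * w \<tau>) integrable_on {0..1}"
    by (intro integrable_diff)
  then have "(\<lambda>\<tau>. (1 - w \<tau>) * sin (2 * \<theta> \<tau>)) integrable_on {0..1}"
    by (simp add: algebra_simps)
  then show ?thesis
    by (rule integrable_on_subinterval) (use assms in auto)
qed

abbreviation coeff_lip :: real where "coeff_lip \<equiv> 1 + max 1 M / min 1 m"

abbreviation angle_lip :: real where "angle_lip \<equiv> 4 * (max 1 M)^3 / (min 1 m)\<^sup>2"

lemma frozen_integrand_estimate:
  assumes "0 \<le> s" "s \<le> \<tau>" "\<tau> \<le> t" "t \<le> 1" and z: "\<theta> s \<le> z" "z \<le> \<theta> t"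
  shows "\<bar>(1 - w \<tau>) * sin (2 * \<theta> \<tau>) - prufer_potential_deriv (w s) z * prufer_rate (w \<tau>) (\<theta> \<tau>)\<bar>
    \<le> coeff_lip * \<bar>w t - w s\<bar> + angle_lip * (sqrt l * max 1 M * (t - s))"
proof -
  have ws: "m \<le> w s" "w s \<le> M" and w\<tau>: "m \<le> w \<tau>" "w \<tau> \<le> M"
    using w_bounds assms by auto
  have "\<bar>w \<tau> - w s\<bar> \<le> \<bar>w t - w s\<bar>"
    using mono_or_antimono_on_between[OF w_monotone, of s \<tau> t] assms by auto
  moreover have "\<bar>\<theta> \<tau> - z\<bar> \<le> sqrt l * max 1 M * (t - s)"
  proof -
    have "\<theta> s \<le> \<theta> \<tau>" "\<theta> \<tau> \<le> \<theta> t"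
      using angle_increment_bounds(1)[of s \<tau>] angle_increment_bounds(1)[of \<tau> t] assms by auto
    then show ?thesis
      using z angle_increment_bounds(2)[of s t] assms by auto
  qed
  ultimately show ?thesis
    using m_pos
    by (intro order_trans[OF prufer_frozen_coefficient_error[OF m_pos ws w\<tau>]] add_mono mult_left_mono) auto
qed

lemma frozen_cell_estimate:
  assumes st: "0 \<le> s" "s \<le> t" "t \<le> 1"
  shows "\<bar>sqrt l * integral {s..t} (\<lambda>\<tau>. (1 - w \<tau>) * sin (2 * \<theta> \<tau>))
      - (prufer_potential (w s) (\<theta> t) - prufer_potential (w s) (\<theta> s))\<bar>
    \<le> sqrt l * (t - s) * (coeff_lip * \<bar>w t - w s\<bar> + angle_lip * (sqrt l * max 1 M * (t - s)))"
proof -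
  define P where "P = (\<lambda>\<tau>. (1 - w \<tau>) * sin (2 * \<theta> \<tau>))"
  define f where "f = (\<lambda>\<tau>. sqrt l * prufer_rate (w \<tau>) (\<theta> \<tau>))"
  define Bd where "Bd = sqrt l * (coeff_lip * \<bar>w t - w s\<bar> + angle_lip * (sqrt l * max 1 M * (t - s)))"
  \<comment> \<open>By the mean value theorem, the increment of \<open>\<Phi>(w s, \<theta>)\<close> is the integral of \<open>k \<theta>'\<close>
    for one constant \<open>k\<close>; the integrands are then compared pointwise.\<close>
  have "0 < w s" using w_bounds[of s] m_pos st by auto
  moreover have "\<theta> s \<le> \<theta> t" using angle_increment_bounds(1)[OF st] by simp
  ultimately obtain z where z: "\<theta> s \<le> z" "z \<le> \<theta> t" and mvt:
    "prufer_potential (w s) (\<theta> t) - prufer_potential (w s) (\<theta> s)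
      = (\<theta> t - \<theta> s) * prufer_potential_deriv (w s) z"
    by (rule prufer_potential_mvt)
  define k where "k = prufer_potential_deriv (w s) z"
  have "((\<lambda>\<tau>. k * f \<tau>) has_integral
      prufer_potential (w s) (\<theta> t) - prufer_potential (w s) (\<theta> s)) {s..t}"
    unfolding mvt k_def f_def
    using has_integral_mult_right[OF prufer_equation_on[OF st]] by (simp add: mult.commute)
  moreover have "((\<lambda>\<tau>. sqrt l * P \<tau>) has_integral sqrt l * integral {s..t} P) {s..t}"
    unfolding P_def using integrand_integrable st by (intro has_integral_mult_right integrable_integral) auto
  ultimately have error_integral: "((\<lambda>\<tau>. sqrt l * P \<tau> - k * f \<tau>) has_integral
      sqrt l * integral {s..t} P - (prufer_potential (w s) (\<theta> t) - prufer_potential (w s) (\<theta> s))) {s..t}"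
    by (rule has_integral_diff[rotated])
  have "norm (sqrt l * P \<tau> - k * f \<tau>) \<le> Bd" if "\<tau> \<in> cbox s t" for \<tau>
  proof -
    have "sqrt l * P \<tau> - k * f \<tau> = sqrt l * (P \<tau> - k * prufer_rate (w \<tau>) (\<theta> \<tau>))"
      unfolding f_def by (simp add: algebra_simps)
    then show ?thesis
      using frozen_integrand_estimate[of s \<tau> t z] that st z l_nonneg
      unfolding Bd_def P_def k_def real_norm_def by (simp add: abs_mult mult_left_mono cbox_interval)
  qed
  moreover have "0 \<le> Bd"
    unfolding Bd_def using l_nonneg m_pos st by simp
  ultimately have "norm (sqrt l * integral {s..t} P - (prufer_potential (w s) (\<theta> t) - prufer_potential (w s) (\<theta> s)))
      \<le> Bd * measure lborel (cbox s t)"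
    using error_integral by (intro has_integral_bound) (auto simp: cbox_interval)
  then show ?thesis
    using st unfolding Bd_def P_def by (simp add: content_real algebra_simps)
qed

lemma cell_estimate:
  assumes st: "0 \<le> s" "s \<le> t" "t \<le> 1"
  shows "\<bar>sqrt l * integral {0..t} (\<lambda>\<tau>. (1 - w \<tau>) * sin (2 * \<theta> \<tau>))
      - sqrt l * integral {0..s} (\<lambda>\<tau>. (1 - w \<tau>) * sin (2 * \<theta> \<tau>))
      - (prufer_potential (w t) (\<theta> t) - prufer_potential (w s) (\<theta> s))\<bar>
    \<le> \<bar>w t - w s\<bar> / m + sqrt l * (t - s) * coeff_lip * \<bar>w t - w s\<bar>
      + l * angle_lip * max 1 M * (t - s)\<^sup>2"
proof -
  define P where "P = (\<lambda>\<tau>. (1 - w \<tau>) * sin (2 * \<theta> \<tau>))"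
  define A where "A = sqrt l * integral {s..t} P"
  define C1 C3 U where "C1 = coeff_lip" and "C3 = angle_lip" and "U = max 1 M"
  define \<Phi>s \<Phi>t \<Phi>t' where "\<Phi>s = prufer_potential (w s) (\<theta> s)"
    and "\<Phi>t = prufer_potential (w s) (\<theta> t)" and "\<Phi>t' = prufer_potential (w t) (\<theta> t)"
  have "integral {0..s} P + integral {s..t} P = integral {0..t} P"
    using st integrand_integrable[of 0 t] unfolding P_def
    by (intro Henstock_Kurzweil_Integration.integral_combine) auto
  then have A_eq: "sqrt l * integral {0..t} P - sqrt l * integral {0..s} P = A"
    unfolding A_def by (simp flip: right_diff_distrib)
  have "\<bar>A - (\<Phi>t - \<Phi>s)\<bar> \<le> sqrt l * (t - s) * (C1 * \<bar>w t - w s\<bar> + C3 * (sqrt l * U * (t - s)))"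
    using frozen_cell_estimate[OF st] unfolding A_def P_def C1_def C3_def U_def \<Phi>s_def \<Phi>t_def .
  also have "\<dots> = sqrt l * (t - s) * C1 * \<bar>w t - w s\<bar> + (sqrt l * sqrt l) * C3 * U * (t - s)\<^sup>2"
    by algebra
  finally have frozen: "\<bar>A - (\<Phi>t - \<Phi>s)\<bar> \<le> sqrt l * (t - s) * C1 * \<bar>w t - w s\<bar> + l * C3 * U * (t - s)\<^sup>2"
    using l_nonneg by simp
  have moving: "\<bar>\<Phi>t' - \<Phi>t\<bar> \<le> \<bar>w t - w s\<bar> / m"
    using prufer_potential_lipschitz_coeff[OF m_pos, of "w s" M "w t" "\<theta> t"] w_bounds[of s] w_bounds[of t] st
    unfolding \<Phi>t_def \<Phi>t'_def by auto
  have "\<bar>A - (\<Phi>t' - \<Phi>s)\<bar> \<le> \<bar>A - (\<Phi>t - \<Phi>s)\<bar> + \<bar>\<Phi>t' - \<Phi>t\<bar>"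
    using abs_triangle_ineq4[of "A - (\<Phi>t - \<Phi>s)" "\<Phi>t' - \<Phi>t"] by simp
  with frozen moving A_eq show ?thesis
    unfolding P_def C1_def C3_def U_def \<Phi>s_def \<Phi>t'_def by linarith
qed

lemma partition_estimate:
  assumes x: "x \<in> {0..1}" and N: "0 < N"
  shows "\<bar>sqrt l * integral {0..x} (\<lambda>\<tau>. (1 - w \<tau>) * sin (2 * \<theta> \<tau>))
      - (prufer_potential (w x) (\<theta> x) - prufer_potential (w 0) (\<theta> 0))\<bar>
    \<le> (M - m) / m + x / real N * (sqrt l * coeff_lip * (M - m)
      + l * angle_lip * max 1 M * x)"
proof -
  define C1 C3 where "C1 = coeff_lip" and "C3 = angle_lip"
  define P where "P = (\<lambda>\<tau>. (1 - w \<tau>) * sin (2 * \<theta> \<tau>))"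
  define h where "h = x / real N"
  define s where "s i = real i * h" for i
  define J where "J i = sqrt l * integral {0..s i} P" for i
  define F where "F i = prufer_potential (w (s i)) (\<theta> (s i))" for i
  have h: "0 \<le> h" "real N * h = x" using x N by (auto simp: h_def)
  have s_mono: "s i \<le> s j" if "i \<le> j" for i j
    unfolding s_def using h that by (intro mult_right_mono) auto
  have s_range: "s i \<in> {0..1}" if "i \<le> N" for i
    using s_mono[OF that] h x by (auto simp: s_def)
  have step: "\<bar>J (Suc i) - J i - (F (Suc i) - F i)\<bar>
      \<le> (1 / m + sqrt l * h * C1) * \<bar>w (s (Suc i)) - w (s i)\<bar> + l * C3 * max 1 M * h\<^sup>2"
    if "i < N" for i
  proof -
    have st: "0 \<le> s i" "s i \<le> s (Suc i)" "s (Suc i) \<le> 1"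
      using s_range s_mono that by auto
    have "s (Suc i) - s i = h" by (simp add: s_def algebra_simps)
    then show ?thesis
      using cell_estimate[OF st] unfolding J_def F_def P_def C1_def C3_def by (simp add: distrib_right)
  qed
  have "(\<forall>i<N. w (s i) \<le> w (s (Suc i))) \<or> (\<forall>i<N. w (s (Suc i)) \<le> w (s i))"
    using s_range s_mono by (intro mono_or_antimono_on_comp_incseq[OF w_monotone]) auto
  note telescoped = telescoping_estimate[OF step this]
  have s_ends: "s 0 = 0" "s N = x" using h by (simp_all add: s_def)
  have "\<bar>w x - w 0\<bar> \<le> M - m" using w_bounds[of x] w_bounds[of 0] x by auto
  moreover have "0 \<le> 1 / m + sqrt l * h * C1" using h l_nonneg m_pos by (simp add: C1_def)
  ultimately have "(1 / m + sqrt l * h * C1) * \<bar>w x - w 0\<bar> \<le> (1 / m + sqrt l * h * C1) * (M - m)"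
    by (rule mult_left_mono)
  with telescoped have "\<bar>J N - J 0 - (F N - F 0)\<bar>
      \<le> (1 / m + sqrt l * h * C1) * (M - m) + real N * (l * C3 * max 1 M * h\<^sup>2)"
    unfolding s_ends by linarith
  also have "\<dots> = (M - m) / m + x / real N * (sqrt l * C1 * (M - m) + l * C3 * max 1 M * x)"
    using N m_pos h(2) unfolding h_def by (simp add: field_simps power2_eq_square)
  finally show ?thesis
    using s_ends unfolding J_def F_def P_def C1_def C3_def by simp
qed

lemma integral_bound:
  assumes x: "x \<in> {0..1}"
  shows "\<bar>sqrt l * integral {0..x} (\<lambda>\<tau>. (1 - w \<tau>) * sin (2 * \<theta> \<tau>))\<bar>
    \<le> 2 * (ln (max 1 M) - ln (min 1 m)) + (M - m) / m"
proof (rule field_le_epsilon)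
  fix e :: real
  assume e: "0 < e"
  define c where "c = sqrt l * coeff_lip * (M - m)
    + l * angle_lip * max 1 M * x"
  have "0 \<le> M - m" using w_bounds[of 0] by auto
  then have "0 \<le> c" unfolding c_def using l_nonneg m_pos x by simp
  obtain N :: nat where N: "c / e < real N" using reals_Archimedean2 by blast
  moreover have "0 \<le> c / e" using \<open>0 \<le> c\<close> e by simp
  ultimately have "0 < real N" by linarith
  have "x / real N * c \<le> c / real N"
    using x \<open>0 \<le> c\<close> by (simp add: divide_right_mono mult_left_le_one_le)
  also have "\<dots> < e" using N e \<open>0 < real N\<close> by (simp add: pos_divide_less_eq mult.commute)
  finally have small: "x / real N * c < e" .
  define I \<Phi>x \<Phi>0 where "I = sqrt l * integral {0..x} (\<lambda>\<tau>. (1 - w \<tau>) * sin (2 * \<theta> \<tau>))"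
    and "\<Phi>x = prufer_potential (w x) (\<theta> x)" and "\<Phi>0 = prufer_potential (w 0) (\<theta> 0)"
  have "\<bar>prufer_potential (w y) (\<theta> y)\<bar> \<le> ln (max 1 M) - ln (min 1 m)" if "y \<in> {0..1}" for y
    using w_bounds[OF that] by (intro abs_prufer_potential_le[OF m_pos]) auto
  then have "\<bar>\<Phi>x\<bar> \<le> ln (max 1 M) - ln (min 1 m)" "\<bar>\<Phi>0\<bar> \<le> ln (max 1 M) - ln (min 1 m)"
    using x unfolding \<Phi>x_def \<Phi>0_def by auto
  moreover have "\<bar>I - (\<Phi>x - \<Phi>0)\<bar> \<le> (M - m) / m + x / real N * c"
    using partition_estimate[OF x] \<open>0 < real N\<close> unfolding I_def \<Phi>x_def \<Phi>0_def c_def by simp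
  moreover have "\<bar>I\<bar> \<le> \<bar>I - (\<Phi>x - \<Phi>0)\<bar> + \<bar>\<Phi>x\<bar> + \<bar>\<Phi>0\<bar>"
    using abs_triangle_ineq[of "I - (\<Phi>x - \<Phi>0)" "\<Phi>x - \<Phi>0"] abs_triangle_ineq4[of \<Phi>x \<Phi>0] by simp
  ultimately show "\<bar>I\<bar> \<le> 2 * (ln (max 1 M) - ln (min 1 m)) + (M - m) / m + e"
    using small by argo
qed

end

theorem lemma3p3:
  fixes w :: "real \<Rightarrow> real" and \<theta> :: "real \<Rightarrow> real \<Rightarrow> real" and c1 c2 :: real
  assumes w_L1: "w absolutely_integrable_on {0..1}"
    and w_pos: "AE x in lebesgue_on {0..1}. w x > 0"
    and H1: "mono_on {0..1} w \<or> antimono_on {0..1} w"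
    and H2: "(INF x\<in>{0..1}. w x) > 0"
    and c1: "c1 \<ge> 0"
    and c_nz: "c1 \<noteq> 0 \<or> c2 \<noteq> 0"
    and init: "\<And>l. l \<ge> 0 \<Longrightarrow> \<theta> 0 l = theta0 c1 c2 l"
    and ode: "\<And>l x. l \<ge> 0 \<Longrightarrow> x \<in> {0..1} \<Longrightarrow>
       ((\<lambda>t. sqrt l * ((cos (\<theta> t l))\<^sup>2 + w t * (sin (\<theta> t l))\<^sup>2))
          has_integral (\<theta> x l - \<theta> 0 l)) {0..x}"
  shows "\<exists>\<Lambda>>0. \<exists>M>0. \<forall>l\<ge>\<Lambda>. \<forall>x\<in>{0..1}. \<bar>Hfun w \<theta> x l\<bar> \<le> M"
proof -
  define m M where "m = (INF x\<in>{0..1}. w x)" and "M = max (w 0) (w 1)"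
  have m: "0 < m" using H2 unfolding m_def .
  have w_bounds: "m \<le> w \<tau> \<and> w \<tau> \<le> M" if "\<tau> \<in> {0..1}" for \<tau>
    using mono_or_antimono_on_INF_max_bounds[OF H1 that] unfolding m_def M_def .
  define K where "K = max 1 (ln (max 1 M) - ln (min 1 m) + (M - m) / (2 * m))"
  have "\<bar>Hfun w \<theta> x l\<bar> \<le> K" if "0 \<le> l" "x \<in> {0..1}" for l x
  proof -
    interpret prufer_solution w "\<lambda>t. \<theta> t l" l m M
    proof
      show "((\<lambda>\<tau>. sqrt l * prufer_rate (w \<tau>) (\<theta> \<tau> l)) has_integral \<theta> x l - \<theta> 0 l) {0..x}"
        if "x \<in> {0..1}" for x
        using ode[OF \<open>0 \<le> l\<close> that] unfolding prufer_rate_def .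
    qed (fact that(1) m w_bounds H1 w_L1)+
    have "\<bar>Hfun w \<theta> x l\<bar> = \<bar>sqrt l * integral {0..x} (\<lambda>t. (1 - w t) * sin (2 * \<theta> t l))\<bar> / 2"
      unfolding Hfun_def by (simp add: abs_mult)
    also have "\<dots> \<le> ln (max 1 M) - ln (min 1 m) + (M - m) / (2 * m)"
      using integral_bound[OF that(2)] divide_divide_eq_left[of "M - m" m 2] by (simp only: mult.commute) argo
    finally show ?thesis unfolding K_def by linarith
  qed
  then have "\<forall>l\<ge>1. \<forall>x\<in>{0..1}. \<bar>Hfun w \<theta> x l\<bar> \<le> K" by auto
  moreover have "0 < K" unfolding K_def by simp
  ultimately show ?thesis
    by (intro exI[of _ "1::real"] conjI exI[of _ K]) auto
qed

end
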